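(* Let $\mathbb{A}$ be the Fraïssé limit of the class $\mathscr{C}$ of all totally ordered structures from a free amalgamation class $\mathscr{C}_0$ of finite irreflexive $\sigma_0$-structures (with $\sigma_0$ finite, unary and binary relations only). Let $X, Y, \{z\}\subseteq\mathbb{A}$ be pairwise disjoint finite sets. Then there is $\tau\in\operatorname{Aut}(\mathbb{A})$ such that (1) $\tau(x)=x$ for all $x\in X$; (2) $\tau(z)$ is unrelated to every $y\in Y$ and to $z$; (3) $\tau(z)>z$.
   Context: Two elements $u,v$ are related if $u=v$ or $R(u,v)$ or $R(v,u)$ holds for some binary $R\in\sigma_0$. A free amalgamation class is a class $\operatorname{Forb}(\mathscr{F})$ of all finite $\sigma_0$-structures embedding no member of $\mathscr{F}$, where in each member of $\mathscr{F}$ every two elements are related. Irreflexive: each binary relation holds only between distinct elements. $\mathscr{C}$ consists of all $(\sigma_0\uplus\{<\})$-structures obtained from members of $\mathscr{C}_0$ by interpreting $<$ as any total order; $\mathbb{A}$ is its Fraïssé limit (the countable homogeneous structure with age $\mathscr{C}$). *)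

theory Defs
  imports Main "HOL-Library.Countable_Set"
begin

text \<open>A (relational) sigma0-structure: unary symbols of type 'u, binary symbols of type 'b.
  The actual signature is given by finite symbol sets SU, SB. An ordered structure
  additionally carries a binary relation lt interpreting the order symbol.\<close>

record ('u, 'b, 'a) struc =
  dom :: "'a set"
  un  :: "'u \<Rightarrow> 'a \<Rightarrow> bool"
  bin :: "'b \<Rightarrow> 'a \<Rightarrow> 'a \<Rightarrow> bool"

definition embeds0 ::
  "'u set \<Rightarrow> 'b set \<Rightarrow> ('u,'b,'a) struc \<Rightarrow> ('u,'b,'c) struc \<Rightarrow> ('a \<Rightarrow> 'c) \<Rightarrow> bool" where
  "embeds0 SU SB M N f \<longleftrightarrow>
     inj_on f (dom M) \<and> f ` dom M \<subseteq> dom N \<and>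
     (\<forall>s\<in>SU. \<forall>x\<in>dom M. un M s x \<longleftrightarrow> un N s (f x)) \<and>
     (\<forall>s\<in>SB. \<forall>x\<in>dom M. \<forall>y\<in>dom M. bin M s x y \<longleftrightarrow> bin N s (f x) (f y))"

definition embeds_ord ::
  "'u set \<Rightarrow> 'b set \<Rightarrow> ('u,'b,'a) struc \<Rightarrow> ('a \<Rightarrow> 'a \<Rightarrow> bool)
    \<Rightarrow> ('u,'b,'c) struc \<Rightarrow> ('c \<Rightarrow> 'c \<Rightarrow> bool) \<Rightarrow> ('a \<Rightarrow> 'c) \<Rightarrow> bool" where
  "embeds_ord SU SB M ltM N ltN f \<longleftrightarrow>
     embeds0 SU SB M N f \<and> (\<forall>x\<in>dom M. \<forall>y\<in>dom M. ltM x y \<longleftrightarrow> ltN (f x) (f y))"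

definition related :: "'b set \<Rightarrow> ('u,'b,'a) struc \<Rightarrow> 'a \<Rightarrow> 'a \<Rightarrow> bool" where
  "related SB M u v \<longleftrightarrow> u = v \<or> (\<exists>s\<in>SB. bin M s u v \<or> bin M s v u)"

definition irreflexive_struc :: "'b set \<Rightarrow> ('u,'b,'a) struc \<Rightarrow> bool" where
  "irreflexive_struc SB M \<longleftrightarrow> (\<forall>s\<in>SB. \<forall>x\<in>dom M. \<not> bin M s x x)"

definition forb_family :: "'b set \<Rightarrow> ('u,'b,nat) struc set \<Rightarrow> bool" where
  "forb_family SB F \<longleftrightarrow>
     (\<forall>N\<in>F. finite (dom N) \<and> (\<forall>u\<in>dom N. \<forall>v\<in>dom N. related SB N u v))"

text \<open>Membership in C0 = finite irreflexive members of Forb(F).\<close>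
definition in_C0 :: "'u set \<Rightarrow> 'b set \<Rightarrow> ('u,'b,nat) struc set \<Rightarrow> ('u,'b,'a) struc \<Rightarrow> bool" where
  "in_C0 SU SB F M \<longleftrightarrow>
     finite (dom M) \<and> irreflexive_struc SB M \<and> \<not> (\<exists>N\<in>F. \<exists>f. embeds0 SU SB N M f)"

definition strict_total_on :: "'a set \<Rightarrow> ('a \<Rightarrow> 'a \<Rightarrow> bool) \<Rightarrow> bool" where
  "strict_total_on D lt \<longleftrightarrow>
     (\<forall>x\<in>D. \<not> lt x x) \<and>
     (\<forall>x\<in>D. \<forall>y\<in>D. \<forall>z\<in>D. lt x y \<longrightarrow> lt y z \<longrightarrow> lt x z) \<and>
     (\<forall>x\<in>D. \<forall>y\<in>D. x \<noteq> y \<longrightarrow> lt x y \<or> lt y x)"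

definition in_C ::
  "'u set \<Rightarrow> 'b set \<Rightarrow> ('u,'b,nat) struc set \<Rightarrow> ('u,'b,'a) struc \<Rightarrow> ('a \<Rightarrow> 'a \<Rightarrow> bool) \<Rightarrow> bool" where
  "in_C SU SB F M lt \<longleftrightarrow> in_C0 SU SB F M \<and> strict_total_on (dom M) lt"

definition automorphism ::
  "'u set \<Rightarrow> 'b set \<Rightarrow> ('u,'b,'a) struc \<Rightarrow> ('a \<Rightarrow> 'a \<Rightarrow> bool) \<Rightarrow> ('a \<Rightarrow> 'a) \<Rightarrow> bool" where
  "automorphism SU SB A lt \<tau> \<longleftrightarrow>
     bij_betw \<tau> (dom A) (dom A) \<and> embeds_ord SU SB A lt A lt \<tau>"

definition partial_iso ::
  "'u set \<Rightarrow> 'b set \<Rightarrow> ('u,'b,'a) struc \<Rightarrow> ('a \<Rightarrow> 'a \<Rightarrow> bool) \<Rightarrow> 'a set \<Rightarrow> ('a \<Rightarrow> 'a) \<Rightarrow> bool" where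
  "partial_iso SU SB A lt S f \<longleftrightarrow>
     S \<subseteq> dom A \<and> embeds_ord SU SB (A\<lparr>dom := S\<rparr>) lt A lt f"

definition homogeneous ::
  "'u set \<Rightarrow> 'b set \<Rightarrow> ('u,'b,'a) struc \<Rightarrow> ('a \<Rightarrow> 'a \<Rightarrow> bool) \<Rightarrow> bool" where
  "homogeneous SU SB A lt \<longleftrightarrow>
     (\<forall>S f. finite S \<and> partial_iso SU SB A lt S f \<longrightarrow>
        (\<exists>\<tau>. automorphism SU SB A lt \<tau> \<and> (\<forall>x\<in>S. \<tau> x = f x)))"

text \<open>The age of (A, lt) is C: a finite ordered structure (w.l.o.g. on nat) embeds into A
  iff it belongs to C.\<close>
definition age_is_C ::
  "'u set \<Rightarrow> 'b set \<Rightarrow> ('u,'b,nat) struc set \<Rightarrow> ('u,'b,'a) struc \<Rightarrow> ('a \<Rightarrow> 'a \<Rightarrow> bool) \<Rightarrow> bool" where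
  "age_is_C SU SB F A lt \<longleftrightarrow>
     (\<forall>(M::('u,'b,nat) struc) ltM. finite (dom M) \<longrightarrow>
        ((\<exists>f. embeds_ord SU SB M ltM A lt f) \<longleftrightarrow> in_C SU SB F M ltM))"

definition fraisse_limit_C ::
  "'u set \<Rightarrow> 'b set \<Rightarrow> ('u,'b,nat) struc set \<Rightarrow> ('u,'b,'a) struc \<Rightarrow> ('a \<Rightarrow> 'a \<Rightarrow> bool) \<Rightarrow> bool" where
  "fraisse_limit_C SU SB F A lt \<longleftrightarrow>
     countable (dom A) \<and> homogeneous SU SB A lt \<and> age_is_C SU SB F A lt"

end

theory Submission
  imports Defs
begin

text \<open>Let S = X \<union> Y \<union> {z}. Amalgamate the substructure on S freely over X with a copy z' of
  the substructure on X \<union> {z}, and order z' immediately above z. The result omits every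
  forbidden structure: these are cliques, so a copy of one through z' meets S only inside X,
  and folding z' onto z embeds it into A. Hence the amalgam lies in the age and, by
  homogeneity, is realised over S by a point w of A. This w is a copy of z over X lying
  above z and unrelated to Y \<union> {z}, so a second use of homogeneity extends the map fixing X
  and sending z to w to the required automorphism.\<close>

lemma embeds_ord_comp:
  assumes "embeds_ord SU SB M ltM N ltN f" and "embeds_ord SU SB N ltN P ltP g"
  shows "embeds_ord SU SB M ltM P ltP (g \<circ> f)"
  using assms unfolding embeds_ord_def embeds0_def
  by (auto simp: inj_on_def image_subset_iff)

lemma embeds_ord_restrict:
  assumes "embeds_ord SU SB M ltM N ltN f" and "D \<subseteq> dom M"
  shows "embeds_ord SU SB (M\<lparr>dom := D\<rparr>) ltM N ltN f"
  using assms inj_on_subset[of f "dom M" D] unfolding embeds_ord_def embeds0_def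
  by (simp add: subset_iff) blast

lemma embeds_ord_inv_into:
  assumes "embeds_ord SU SB M ltM N ltN f"
  shows "embeds_ord SU SB (N\<lparr>dom := f ` dom M\<rparr>) ltN M ltM (inv_into (dom M) f)"
proof -
  have "inj_on f (dom M)" using assms unfolding embeds_ord_def embeds0_def by blast
  then have "inj_on (inv_into (dom M) f) (f ` dom M)" "inv_into (dom M) f ` f ` dom M \<subseteq> dom M"
    and "\<And>x. x \<in> dom M \<Longrightarrow> inv_into (dom M) f (f x) = x"
    by (auto simp: inj_on_inv_into inv_into_into)
  then show ?thesis
    using assms unfolding embeds_ord_def embeds0_def Ball_image_comp comp_def by simp
qed

lemma embeds_ord_cong:
  assumes "\<And>x. x \<in> dom M \<Longrightarrow> f x = g x"
  shows "embeds_ord SU SB M ltM N ltN f \<longleftrightarrow> embeds_ord SU SB M ltM N ltN g"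
  unfolding embeds_ord_def embeds0_def
  using assms inj_on_cong[of "dom M" f g] image_cong[of "dom M" "dom M" f g] by simp

lemma embeds0_related:
  assumes "embeds0 SU SB M N f" and "u \<in> dom M" and "v \<in> dom M"
  shows "related SB N (f u) (f v) \<longleftrightarrow> related SB M u v"
  using assms unfolding embeds0_def related_def inj_on_def by (metis image_subset_iff)

lemma strict_total_on_image:
  assumes "strict_total_on D (\<lambda>i j. R (f i) (f j))"
  shows "strict_total_on (f ` D) R"
  using assms unfolding strict_total_on_def Ball_image_comp comp_def by fast

definition pullback :: "('u,'b,'a) struc \<Rightarrow> ('i \<Rightarrow> 'a) \<Rightarrow> 'i set \<Rightarrow> ('u,'b,'i) struc" where
  "pullback A \<rho> D = \<lparr>dom = D, un = (\<lambda>s i. un A s (\<rho> i)), bin = (\<lambda>s i j. bin A s (\<rho> i) (\<rho> j))\<rparr>"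

lemma embeds_ord_pullback:
  assumes "inj_on \<rho> D" and "\<rho> ` D \<subseteq> dom A"
  shows "embeds_ord SU SB (pullback A \<rho> D) (\<lambda>i j. lt (\<rho> i) (\<rho> j)) A lt \<rho>"
  using assms unfolding embeds_ord_def embeds0_def pullback_def by simp

lemma age_pullback_in_C:
  fixes \<rho> :: "nat \<Rightarrow> 'a"
  assumes "age_is_C SU SB F A lt" and "finite D" and "inj_on \<rho> D" and "\<rho> ` D \<subseteq> dom A"
  shows "in_C SU SB F (pullback A \<rho> D) (\<lambda>i j. lt (\<rho> i) (\<rho> j))"
proof -
  have "embeds_ord SU SB (pullback A \<rho> D) (\<lambda>i j. lt (\<rho> i) (\<rho> j)) A lt \<rho>"
    by (rule embeds_ord_pullback[OF assms(3,4)])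
  moreover have "finite (dom (pullback A \<rho> D))" using assms(2) by (simp add: pullback_def)
  ultimately show ?thesis using assms(1) unfolding age_is_C_def by blast
qed

lemma age_irreflexive:
  assumes "age_is_C SU SB F A lt" and "x \<in> dom A" and "s \<in> SB"
  shows "\<not> bin A s x x"
proof -
  have "in_C SU SB F (pullback A (\<lambda>_::nat. x) {0}) (\<lambda>_ _. lt x x)"
    using age_pullback_in_C[OF assms(1), of "{0}" "\<lambda>_. x"] assms(2) by simp
  then show ?thesis
    using assms(3) unfolding in_C_def in_C0_def irreflexive_struc_def pullback_def by simp
qed

lemma age_strict_total_on:
  fixes A :: "('u,'b,'a) struc"
  assumes "age_is_C SU SB F A lt" and "finite S" and "S \<subseteq> dom A"
  shows "strict_total_on S lt"
proof -
  obtain d :: "nat \<Rightarrow> 'a" where d: "bij_betw d {0..<card S} S"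
    using ex_bij_betw_nat_finite[OF assms(2)] by blast
  then have "in_C SU SB F (pullback A d {0..<card S}) (\<lambda>i j. lt (d i) (d j))"
    using age_pullback_in_C[OF assms(1)] assms(3) unfolding bij_betw_def by simp
  then have "strict_total_on {0..<card S} (\<lambda>i j. lt (d i) (d j))"
    unfolding in_C_def pullback_def by simp
  with d show ?thesis using strict_total_on_image unfolding bij_betw_def by metis
qed

lemma age_not_embeds_forbidden:
  assumes "age_is_C SU SB F A lt" and "forb_family SB F" and "N \<in> F"
  shows "\<not> embeds0 SU SB N A f"
proof
  assume "embeds0 SU SB N A f"
  then have "embeds_ord SU SB N (\<lambda>x y. lt (f x) (f y)) A lt f"
    unfolding embeds_ord_def by simp
  moreover have "finite (dom N)" using assms(2,3) unfolding forb_family_def by blast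
  ultimately have "in_C SU SB F N (\<lambda>x y. lt (f x) (f y))"
    using assms(1) unfolding age_is_C_def by blast
  moreover have "embeds0 SU SB N N id" unfolding embeds0_def by simp
  ultimately show False using assms(3) unfolding in_C_def in_C0_def by blast
qed

lemma fraisse_extension_property:
  fixes M :: "('u,'b,nat) struc" and A :: "('u,'b,'a) struc"
  assumes hom: "homogeneous SU SB A lt" and age: "age_is_C SU SB F A lt"
    and M: "in_C SU SB F M ltM" and "D \<subseteq> dom M"
    and \<rho>: "embeds_ord SU SB (M\<lparr>dom := D\<rparr>) ltM A lt \<rho>"
  shows "\<exists>\<psi>. embeds_ord SU SB M ltM A lt \<psi> \<and> (\<forall>i\<in>D. \<psi> i = \<rho> i)"
proof -
  have "finite (dom M)" using M unfolding in_C_def in_C0_def by blast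
  then obtain g where g: "embeds_ord SU SB M ltM A lt g"
    using age M unfolding age_is_C_def by blast
  have g_D: "embeds_ord SU SB (M\<lparr>dom := D\<rparr>) ltM A lt g"
    using embeds_ord_restrict[OF g \<open>D \<subseteq> dom M\<close>] .
  define h where "h = \<rho> \<circ> inv_into D g"
  have "embeds_ord SU SB (A\<lparr>dom := g ` D\<rparr>) lt A lt h"
    using embeds_ord_comp[OF embeds_ord_inv_into[OF g_D] \<rho>] by (simp add: h_def)
  moreover have "g ` D \<subseteq> dom A" "finite (g ` D)"
    using g_D \<open>finite (dom M)\<close> \<open>D \<subseteq> dom M\<close> finite_subset
    unfolding embeds_ord_def embeds0_def by auto
  ultimately obtain \<sigma> where \<sigma>: "automorphism SU SB A lt \<sigma>" and \<sigma>_h: "\<forall>x\<in>g ` D. \<sigma> x = h x"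
    using hom unfolding homogeneous_def partial_iso_def by blast
  have "embeds_ord SU SB M ltM A lt (\<sigma> \<circ> g)"
    using embeds_ord_comp[OF g] \<sigma> unfolding automorphism_def by blast
  moreover have "inj_on g D" using g_D unfolding embeds_ord_def embeds0_def by simp
  then have "\<forall>i\<in>D. (\<sigma> \<circ> g) i = \<rho> i" using \<sigma>_h by (simp add: h_def)
  ultimately show ?thesis by blast
qed

text \<open>For \<rho> injective off p, \<open>free_copy A X \<rho> D p\<close> is the free amalgam of the pullback of A
  to D - {p} with a copy p of the point \<rho> p: p keeps the relations of \<rho> p to X and no others.
  \<open>split_order\<close> places p immediately above \<rho> p.\<close>

definition free_copy :: "('u,'b,'a) struc \<Rightarrow> 'a set \<Rightarrow> ('i \<Rightarrow> 'a) \<Rightarrow> 'i set \<Rightarrow> 'i \<Rightarrow> ('u,'b,'i) struc" where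
  "free_copy A X \<rho> D p = \<lparr>dom = D, un = (\<lambda>s i. un A s (\<rho> i)),
     bin = (\<lambda>s i j. bin A s (\<rho> i) (\<rho> j) \<and> (i = p \<longrightarrow> \<rho> j \<in> X) \<and> (j = p \<longrightarrow> \<rho> i \<in> X))\<rparr>"

definition split_order :: "('a \<Rightarrow> 'a \<Rightarrow> bool) \<Rightarrow> ('i \<Rightarrow> 'a) \<Rightarrow> 'i \<Rightarrow> 'i \<Rightarrow> 'i \<Rightarrow> bool" where
  "split_order lt \<rho> p i j \<longleftrightarrow> lt (\<rho> i) (\<rho> j) \<or> (\<rho> i = \<rho> j \<and> i \<noteq> p \<and> j = p)"

lemma strict_total_on_split_order:
  assumes lt: "strict_total_on (\<rho> ` D) lt" and inj: "inj_on \<rho> (D - {p})"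
  shows "strict_total_on D (split_order lt \<rho> p)"
  unfolding strict_total_on_def
proof (intro conjI ballI impI)
  have irrefl: "\<not> lt (\<rho> i) (\<rho> i)" if "i \<in> D" for i
    using lt that unfolding strict_total_on_def by blast
  then show "\<not> split_order lt \<rho> p i i" if "i \<in> D" for i
    using that unfolding split_order_def by blast
  show "split_order lt \<rho> p i k"
    if "i \<in> D" "j \<in> D" "k \<in> D" "split_order lt \<rho> p i j" "split_order lt \<rho> p j k" for i j k
    using that lt irrefl unfolding split_order_def strict_total_on_def Ball_image_comp comp_def
    by metis
  show "split_order lt \<rho> p i j \<or> split_order lt \<rho> p j i" if "i \<in> D" "j \<in> D" "i \<noteq> j" for i j
  proof (cases "\<rho> i = \<rho> j")
    case True
    with inj that have "i = p \<or> j = p" unfolding inj_on_def by blast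
    with True \<open>i \<noteq> j\<close> show ?thesis unfolding split_order_def by auto
  next
    case False
    with lt that show ?thesis unfolding split_order_def strict_total_on_def by blast
  qed
qed

lemma free_copy_fold_clique:
  assumes f: "embeds0 SU SB N (free_copy A X \<rho> D p) f"
    and clique: "\<forall>u\<in>dom N. \<forall>v\<in>dom N. related SB N u v"
    and inj: "inj_on \<rho> (D - {p})" and "\<rho> ` D \<subseteq> dom A" and "\<rho> p \<notin> X"
    and irrefl: "\<forall>s\<in>SB. \<not> bin A s (\<rho> p) (\<rho> p)"
  shows "embeds0 SU SB N A (\<rho> \<circ> f)"
proof -
  let ?M = "free_copy A X \<rho> D p"
  have f_inj: "inj_on f (dom N)" and f_dom: "f ` dom N \<subseteq> D"
    and f_un: "\<forall>s\<in>SU. \<forall>u\<in>dom N. un N s u \<longleftrightarrow> un A s (\<rho> (f u))"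
    and f_bin: "\<forall>s\<in>SB. \<forall>u\<in>dom N. \<forall>v\<in>dom N. bin N s u v \<longleftrightarrow> bin ?M s (f u) (f v)"
    using f unfolding embeds0_def by (simp_all add: free_copy_def)
  have neighbour_in_X: "\<rho> (f v) \<in> X"
    if "u \<in> dom N" "v \<in> dom N" "f u = p" "f v \<noteq> p" for u v
  proof -
    have "related SB ?M (f u) (f v)"
      using embeds0_related[OF f that(1,2)] clique that(1,2) by blast
    with that(3,4) show ?thesis unfolding related_def free_copy_def by auto
  qed
  have "inj_on (\<rho> \<circ> f) (dom N)"
  proof (rule inj_onI)
    fix u v assume uv: "u \<in> dom N" "v \<in> dom N" "(\<rho> \<circ> f) u = (\<rho> \<circ> f) v"
    have "f u = f v"
    proof (cases "f u = p \<or> f v = p")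
      case True
      then show ?thesis
        using neighbour_in_X uv \<open>\<rho> p \<notin> X\<close> by (metis comp_apply)
    next
      case False
      then show ?thesis using inj uv(3) f_dom uv(1,2) unfolding inj_on_def by auto
    qed
    then show "u = v" using f_inj uv(1,2) unfolding inj_on_def by blast
  qed
  moreover have "bin N s u v \<longleftrightarrow> bin A s (\<rho> (f u)) (\<rho> (f v))"
    if "s \<in> SB" "u \<in> dom N" "v \<in> dom N" for s u v
    using f_bin that neighbour_in_X[OF that(2,3)] neighbour_in_X[OF that(3,2)] irrefl \<open>\<rho> p \<notin> X\<close>
    by (cases "f u = p"; cases "f v = p") (auto simp: free_copy_def)
  moreover have "(\<rho> \<circ> f) ` dom N \<subseteq> dom A"
    using f_dom \<open>\<rho> ` D \<subseteq> dom A\<close> by (metis image_comp image_mono order_trans)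
  ultimately show ?thesis
    using f_un unfolding embeds0_def by simp
qed

lemma free_copy_in_C:
  assumes age: "age_is_C SU SB F A lt" and ff: "forb_family SB F"
    and "finite D" and "\<rho> ` D \<subseteq> dom A" and "inj_on \<rho> (D - {p})" and "\<rho> p \<notin> X" and "p \<in> D"
  shows "in_C SU SB F (free_copy A X \<rho> D p) (split_order lt \<rho> p)"
  unfolding in_C_def in_C0_def
proof (intro conjI)
  show "finite (dom (free_copy A X \<rho> D p))" using \<open>finite D\<close> by (simp add: free_copy_def)
  show "irreflexive_struc SB (free_copy A X \<rho> D p)"
    using age_irreflexive[OF age] \<open>\<rho> ` D \<subseteq> dom A\<close>
    unfolding irreflexive_struc_def free_copy_def by auto
  show "strict_total_on (dom (free_copy A X \<rho> D p)) (split_order lt \<rho> p)"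
  proof -
    have "strict_total_on (\<rho> ` D) lt"
      using age_strict_total_on[OF age] \<open>finite D\<close> \<open>\<rho> ` D \<subseteq> dom A\<close> by blast
    then show ?thesis
      using strict_total_on_split_order \<open>inj_on \<rho> (D - {p})\<close> by (simp add: free_copy_def)
  qed
  show "\<not> (\<exists>N\<in>F. \<exists>f. embeds0 SU SB N (free_copy A X \<rho> D p) f)"
  proof clarify
    fix N f assume N: "N \<in> F" and f: "embeds0 SU SB N (free_copy A X \<rho> D p) f"
    have clique: "\<forall>u\<in>dom N. \<forall>v\<in>dom N. related SB N u v"
      using ff N unfolding forb_family_def by blast
    have "\<forall>s\<in>SB. \<not> bin A s (\<rho> p) (\<rho> p)"
      using age_irreflexive[OF age] \<open>\<rho> ` D \<subseteq> dom A\<close> \<open>p \<in> D\<close> by blast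
    with free_copy_fold_clique[OF f clique assms(5,4,6)]
    have "embeds0 SU SB N A (\<rho> \<circ> f)" .
    then show False using age_not_embeds_forbidden[OF age ff N] by blast
  qed
qed

lemma embeds_ord_free_copy_off_point:
  assumes "inj_on \<rho> (D - {p})" and "\<rho> ` D \<subseteq> dom A"
  shows "embeds_ord SU SB ((free_copy A X \<rho> D p)\<lparr>dom := D - {p}\<rparr>) (split_order lt \<rho> p) A lt \<rho>"
  using assms unfolding embeds_ord_def embeds0_def free_copy_def split_order_def by auto

lemma embeds_ord_into_free_copy:
  assumes "inj_on \<rho> (D - {p})" and "p \<in> D" and "X \<subseteq> \<rho> ` (D - {p})" and "\<rho> p \<notin> X"
    and irrefl: "\<forall>s\<in>SB. \<not> bin A s (\<rho> p) (\<rho> p)"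
  shows "embeds_ord SU SB (A\<lparr>dom := insert (\<rho> p) X\<rparr>) lt (free_copy A X \<rho> D p) (split_order lt \<rho> p)
           ((inv_into (D - {p}) \<rho>)(\<rho> p := p))"
    (is "embeds_ord SU SB _ lt _ _ ?c")
proof -
  have c_X: "?c x \<in> D - {p}" "\<rho> (?c x) = x" if "x \<in> X" for x
  proof -
    have "x \<in> \<rho> ` (D - {p})" and "x \<noteq> \<rho> p" using that assms(3,4) by auto
    then show "?c x \<in> D - {p}" "\<rho> (?c x) = x"
      using inv_into_into[of x \<rho> "D - {p}"] f_inv_into_f[of x \<rho> "D - {p}"] by simp_all
  qed
  have c_left_inverse: "\<rho> (?c a) = a" and c_dom: "?c a \<in> D"
    and c_eq_p: "?c a = p \<longleftrightarrow> a = \<rho> p" if "a \<in> insert (\<rho> p) X" for a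
    using that \<open>p \<in> D\<close> \<open>\<rho> p \<notin> X\<close> c_X[of a] by auto
  have "inj_on ?c (insert (\<rho> p) X)"
    by (metis c_left_inverse inj_on_inverseI)
  then show ?thesis
    using c_left_inverse c_dom c_eq_p irrefl \<open>\<rho> p \<notin> X\<close>
    unfolding embeds_ord_def embeds0_def free_copy_def split_order_def
    by (auto simp del: fun_upd_apply)
qed

lemma free_copy_embedding_fixes:
  assumes \<psi>: "embeds_ord SU SB (free_copy A X \<rho> D p) (split_order lt \<rho> p) A lt \<psi>"
    and \<psi>_\<rho>: "\<forall>i\<in>D - {p}. \<psi> i = \<rho> i"
    and "inj_on \<rho> (D - {p})" and "p \<in> D" and X: "X \<subseteq> \<rho> ` (D - {p})" and "\<rho> p \<notin> X"
    and "\<forall>s\<in>SB. \<not> bin A s (\<rho> p) (\<rho> p)" and "insert (\<rho> p) X \<subseteq> dom A"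
  shows "partial_iso SU SB A lt (insert (\<rho> p) X) (id(\<rho> p := \<psi> p))"
proof -
  let ?c = "(inv_into (D - {p}) \<rho>)(\<rho> p := p)"
  have "embeds_ord SU SB (A\<lparr>dom := insert (\<rho> p) X\<rparr>) lt A lt (\<psi> \<circ> ?c)"
    using embeds_ord_comp[OF embeds_ord_into_free_copy[OF assms(3-7)] \<psi>] .
  moreover have "(\<psi> \<circ> ?c) a = (id(\<rho> p := \<psi> p)) a" if "a \<in> insert (\<rho> p) X" for a
  proof (cases "a = \<rho> p")
    case False
    with that X have "a \<in> \<rho> ` (D - {p})" by auto
    then show ?thesis
      using False \<psi>_\<rho> inv_into_into[of a \<rho> "D - {p}"] f_inv_into_f[of a \<rho> "D - {p}"] by simp
  qed simp
  ultimately have "embeds_ord SU SB (A\<lparr>dom := insert (\<rho> p) X\<rparr>) lt A lt (id(\<rho> p := \<psi> p))"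
    using embeds_ord_cong[of "A\<lparr>dom := insert (\<rho> p) X\<rparr>" "\<psi> \<circ> ?c" "id(\<rho> p := \<psi> p)"]
    by simp
  then show ?thesis unfolding partial_iso_def using \<open>insert (\<rho> p) X \<subseteq> dom A\<close> by simp
qed

lemma free_copy_embedding_above:
  assumes "embeds_ord SU SB (free_copy A X \<rho> D p) (split_order lt \<rho> p) A lt \<psi>"
    and "i \<in> D" and "p \<in> D" and "i \<noteq> p" and "\<rho> i = \<rho> p"
  shows "lt (\<psi> i) (\<psi> p)"
proof -
  have "\<forall>x\<in>D. \<forall>y\<in>D. split_order lt \<rho> p x y \<longleftrightarrow> lt (\<psi> x) (\<psi> y)"
    using assms(1) unfolding embeds_ord_def by (simp add: free_copy_def)
  moreover have "split_order lt \<rho> p i p" using assms(4,5) by (simp add: split_order_def)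
  ultimately show ?thesis using assms(2,3) by blast
qed

lemma free_copy_embedding_unrelated:
  assumes "embeds_ord SU SB (free_copy A X \<rho> D p) (split_order lt \<rho> p) A lt \<psi>"
    and "i \<in> D" and "p \<in> D" and "i \<noteq> p" and "\<rho> i \<notin> X"
  shows "\<not> related SB A (\<psi> p) (\<psi> i)"
proof -
  have "\<not> related SB (free_copy A X \<rho> D p) p i"
    using assms(4,5) unfolding related_def free_copy_def by auto
  moreover have "embeds0 SU SB (free_copy A X \<rho> D p) A \<psi>"
    using assms(1) unfolding embeds_ord_def by blast
  ultimately show ?thesis
    using embeds0_related[of SU SB "free_copy A X \<rho> D p" A \<psi> p i] assms(2,3)
    by (simp add: free_copy_def)
qed

lemma exists_free_copy_above:
  fixes A :: "('u,'b,'a) struc"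
  assumes ff: "forb_family SB F" and hom: "homogeneous SU SB A lt" and age: "age_is_C SU SB F A lt"
    and "finite X" and "finite Y" and "X \<subseteq> dom A" and "Y \<subseteq> dom A" and "z \<in> dom A"
    and "z \<notin> X" and "X \<inter> Y = {}"
  shows "\<exists>w. partial_iso SU SB A lt (insert z X) (id(z := w)) \<and> lt z w \<and>
             (\<forall>y\<in>insert z Y. \<not> related SB A w y)"
proof -
  define S where "S = insert z (X \<union> Y)"
  define n where "n = card S"
  have "finite S" using \<open>finite X\<close> \<open>finite Y\<close> by (simp add: S_def)
  then obtain d :: "nat \<Rightarrow> 'a" where d: "bij_betw d {0..<n} S"
    unfolding n_def by (rule ex_bij_betw_nat_finite[THEN exE])
  define \<rho> where "\<rho> = d(n := z)"
  define D where "D = insert n {0..<n}"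
  have D_off: "D - {n} = {0..<n}" by (auto simp: D_def)
  have "\<rho> i = d i" if "i \<in> {0..<n}" for i using that by (simp add: \<rho>_def)
  then have inj: "inj_on \<rho> (D - {n})" and img: "\<rho> ` (D - {n}) = S"
    using d inj_on_cong[of "{0..<n}" \<rho> d] image_cong[of "{0..<n}" "{0..<n}" \<rho> d]
    unfolding D_off bij_betw_def by simp_all
  have "\<rho> n = z" "n \<in> D" "finite D" by (simp_all add: \<rho>_def D_def)
  then have \<rho>_D: "\<rho> ` D \<subseteq> dom A" and z_notin: "\<rho> n \<notin> X"
    and irrefl: "\<forall>s\<in>SB. \<not> bin A s (\<rho> n) (\<rho> n)"
    using img assms(6-9) age_irreflexive[OF age] by (auto simp: D_def S_def)
  have "in_C SU SB F (free_copy A X \<rho> D n) (split_order lt \<rho> n)"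
    using free_copy_in_C[OF age ff \<open>finite D\<close> \<rho>_D inj z_notin \<open>n \<in> D\<close>] .
  moreover have "D - {n} \<subseteq> dom (free_copy A X \<rho> D n)" by (auto simp: free_copy_def)
  ultimately obtain \<psi> where \<psi>: "embeds_ord SU SB (free_copy A X \<rho> D n) (split_order lt \<rho> n) A lt \<psi>"
    and \<psi>_\<rho>: "\<forall>i\<in>D - {n}. \<psi> i = \<rho> i"
    using fraisse_extension_property[OF hom age _ _ embeds_ord_free_copy_off_point[OF inj \<rho>_D]]
    by blast
  have "X \<subseteq> \<rho> ` (D - {n})" "insert (\<rho> n) X \<subseteq> dom A"
    using img \<open>\<rho> n = z\<close> assms(6,8) by (auto simp: S_def)
  from free_copy_embedding_fixes[OF \<psi> \<psi>_\<rho> inj \<open>n \<in> D\<close> this(1) z_notin irrefl this(2)]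
  have iso: "partial_iso SU SB A lt (insert z X) (id(z := \<psi> n))" by (simp add: \<open>\<rho> n = z\<close>)
  have "z \<in> \<rho> ` (D - {n})" using img by (simp add: S_def)
  then obtain i where "i \<in> D - {n}" "\<rho> i = z" by blast
  then have above: "lt z (\<psi> n)"
    using free_copy_embedding_above[OF \<psi>, of i] \<psi>_\<rho> \<open>n \<in> D\<close> \<open>\<rho> n = z\<close> by simp
  have unrelated: "\<not> related SB A (\<psi> n) y" if "y \<in> insert z Y" for y
  proof -
    have "y \<in> \<rho> ` (D - {n})" using that img by (auto simp: S_def)
    then obtain i where "i \<in> D - {n}" "\<rho> i = y" by blast
    moreover have "y \<notin> X" using that \<open>z \<notin> X\<close> \<open>X \<inter> Y = {}\<close> by auto
    ultimately show ?thesis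
      using free_copy_embedding_unrelated[OF \<psi>, of i] \<psi>_\<rho> \<open>n \<in> D\<close> by simp
  qed
  show ?thesis using iso above unrelated by blast
qed

theorem mainTheorem10:
  fixes SU :: "'u set" and SB :: "'b set"
    and F :: "('u,'b,nat) struc set"
    and A :: "('u,'b,'a) struc" and lt :: "'a \<Rightarrow> 'a \<Rightarrow> bool"
    and X Y :: "'a set" and z :: 'a
  assumes "finite SU" and "finite SB"
    and "forb_family SB F"
    and "fraisse_limit_C SU SB F A lt"
    and "finite X" and "finite Y"
    and "X \<subseteq> dom A" and "Y \<subseteq> dom A" and "z \<in> dom A"
    and "X \<inter> Y = {}" and "z \<notin> X" and "z \<notin> Y"
  shows "\<exists>\<tau>. automorphism SU SB A lt \<tau> \<and>
           (\<forall>x\<in>X. \<tau> x = x) \<and>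
           (\<forall>y\<in>Y. \<not> related SB A (\<tau> z) y) \<and> \<not> related SB A (\<tau> z) z \<and>
           lt z (\<tau> z)"
proof -
  have hom: "homogeneous SU SB A lt" and age: "age_is_C SU SB F A lt"
    using assms(4) unfolding fraisse_limit_C_def by auto
  obtain w where iso: "partial_iso SU SB A lt (insert z X) (id(z := w))" and "lt z w"
    and unrelated: "\<forall>y\<in>insert z Y. \<not> related SB A w y"
    using exists_free_copy_above[OF assms(3) hom age assms(5-9,11,10)] by blast
  moreover have "finite (insert z X)" using assms(5) by simp
  ultimately obtain \<tau> where \<tau>: "automorphism SU SB A lt \<tau>"
    and \<tau>_extends: "\<forall>x\<in>insert z X. \<tau> x = (id(z := w)) x"
    using hom unfolding homogeneous_def by blast
  then have "\<tau> z = w" and "\<forall>x\<in>X. \<tau> x = x" using assms(11) by auto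
  then show ?thesis using \<tau> \<open>lt z w\<close> unrelated by auto
qed

end
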